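(* Let $c>1$, let $m=m_1\cdots m_c\in S_c$, and let $K$ be the set partition of $S_c$ whose only part with more than one element is the set of cyclic shifts $\{m_am_{a+1}\cdots m_cm_1\cdots m_{a-1}:1\le a\le c\}$. Then for every $j\in\{1,2,\ldots,c\}$, in the $K$-equivalence on $S_{c+1}$ we have $j\rightharpoonup m\equiv m\leftharpoonup(j+1)$ and $m\leftharpoonup j\equiv (j+1)\rightharpoonup m$.
   Context: Permutations are written in one-line notation as words. For a word $w$ and a positive integer $i$, $i\rightharpoonup w$ denotes the word obtained by increasing by $1$ each letter of $w$ that is $\ge i$ and then prepending $i$; $w\leftharpoonup i$ is obtained by increasing by $1$ each letter of $w$ that is $\ge i$ and then appending $i$ at the right end. The order permutation (standardization) of a word $u$ of distinct positive integers of length $\ell$ is the unique $\pi\in S_\ell$ with $\pi_i<\pi_j$ iff $u_i<u_j$. The $K$-equivalence on $S_n$ is generated by declaring $\phi\equiv\psi$ whenever $\phi=aub$, $\psi=avb$ for words $a,b,u,v$ with $u,v$ of length $c$ whose order permutations lie in the same part of $K$. *)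

theory Defs
  imports Main
begin

definition Sym :: "nat \<Rightarrow> nat list set" where
  "Sym n = {w. distinct w \<and> set w = {1..n}}"

text \<open>i \<rightharpoonup> w : shift letters \<ge> i up by one, then prepend i.\<close>
definition prep :: "nat \<Rightarrow> nat list \<Rightarrow> nat list" where
  "prep i w = i # map (\<lambda>x. if i \<le> x then x + 1 else x) w"

text \<open>w \<leftharpoonup> i : shift letters \<ge> i up by one, then append i.\<close>
definition appd :: "nat list \<Rightarrow> nat \<Rightarrow> nat list" where
  "appd w i = map (\<lambda>x. if i \<le> x then x + 1 else x) w @ [i]"

text \<open>Order permutation (standardization) of a word of distinct positive integers.\<close>
definition std :: "nat list \<Rightarrow> nat list" where
  "std u = map (\<lambda>x. card {y \<in> set u. y \<le> x}) u"

definition Kstep :: "nat list set set \<Rightarrow> nat \<Rightarrow> nat \<Rightarrow> nat list \<Rightarrow> nat list \<Rightarrow> bool" where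
  "Kstep K c n phi psi \<longleftrightarrow> phi \<in> Sym n \<and> psi \<in> Sym n \<and>
     (\<exists>a b u v. phi = a @ u @ b \<and> psi = a @ v @ b \<and> length u = c \<and> length v = c \<and>
        (\<exists>P\<in>K. std u \<in> P \<and> std v \<in> P))"

definition Kequiv :: "nat list set set \<Rightarrow> nat \<Rightarrow> nat \<Rightarrow> nat list \<Rightarrow> nat list \<Rightarrow> bool" where
  "Kequiv K c n phi psi \<longleftrightarrow> phi \<in> Sym n \<and> psi \<in> Sym n \<and>
     (\<lambda>x y. Kstep K c n x y \<or> Kstep K c n y x)\<^sup>*\<^sup>* phi psi"

definition cyc_shifts :: "nat list \<Rightarrow> nat list set" where
  "cyc_shifts m = {rotate k m | k. k < length m}"

definition cycK :: "nat \<Rightarrow> nat list \<Rightarrow> nat list set set" where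
  "cycK c m = insert (cyc_shifts m) {{p} | p. p \<in> Sym c - cyc_shifts m}"

end

theory Submission
  imports Defs
begin

text \<open>Write \<open>m = xs j ys\<close> and let \<open>xs', ys'\<close> be \<open>xs, ys\<close> with letters \<open>\<ge> j\<close> raised by one.
  Then \<open>j \<rightharpoonup> m = j (xs' (j+1) ys')\<close> and \<open>m \<leftharpoonup> (j+1) = (xs' j ys') (j+1)\<close>, and both
  bracketed factors standardize to \<open>m\<close>. Rotating the first factor and then regrouping gives
  \<open>(j ys' xs') (j+1)\<close>, whose bracketed factor is a rotation of \<open>xs' j ys'\<close>; since rotating a word
  rotates its standardization, each rotation is a single K-step. The second equivalence is
  obtained the same way from \<open>m \<leftharpoonup> j = (xs' (j+1) ys') j\<close>.\<close>

definition shift_up :: "nat \<Rightarrow> nat \<Rightarrow> nat" where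
  "shift_up i x = (if i \<le> x then x + 1 else x)"

lemma prep_eq: "prep i w = i # map (shift_up i) w"
  by (simp add: prep_def shift_up_def[abs_def])

lemma appd_eq: "appd w i = map (shift_up i) w @ [i]"
  by (simp add: appd_def shift_up_def[abs_def])

lemma strict_mono_on_shift_up: "strict_mono_on A (shift_up i)"
  by (auto simp: strict_mono_on_def shift_up_def)

lemma shift_up_Suc: "x \<noteq> j \<Longrightarrow> shift_up (Suc j) x = shift_up j x"
  by (auto simp: shift_up_def)

lemma map_shift_up_split:
  assumes "distinct (xs @ j # ys)"
  shows "map (shift_up j) (xs @ j # ys) = map (shift_up j) xs @ (j + 1) # map (shift_up j) ys"
    and "map (shift_up (j + 1)) (xs @ j # ys) = map (shift_up j) xs @ j # map (shift_up j) ys"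
proof -
  have "map (shift_up (j + 1)) zs = map (shift_up j) zs" if "j \<notin> set zs" for zs
    using that by (auto intro: shift_up_Suc)
  moreover have "j \<notin> set xs" "j \<notin> set ys"
    using assms by auto
  ultimately show "map (shift_up j) (xs @ j # ys) = map (shift_up j) xs @ (j + 1) # map (shift_up j) ys"
    and "map (shift_up (j + 1)) (xs @ j # ys) = map (shift_up j) xs @ j # map (shift_up j) ys"
    by (simp_all add: shift_up_def)
qed

lemma length_Sym: "m \<in> Sym c \<Longrightarrow> length m = c"
  by (auto simp: Sym_def dest: distinct_card)

lemma set_map_shift_up:
  assumes "set m = {1..c}" "i \<in> {1..c+1}"
  shows "set (map (shift_up i) m) = {1..c+1} - {i}"
proof (intro equalityI subsetI)
  fix y assume "y \<in> set (map (shift_up i) m)"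
  then show "y \<in> {1..c+1} - {i}"
    using assms by (auto simp: shift_up_def)
next
  fix y assume y: "y \<in> {1..c+1} - {i}"
  show "y \<in> set (map (shift_up i) m)"
  proof (cases "y < i")
    case True
    then have "shift_up i y = y" "y \<in> set m"
      using y assms by (auto simp: shift_up_def)
    then show ?thesis by (metis image_eqI set_map)
  next
    case False
    then have "shift_up i (y - 1) = y" "y - 1 \<in> set m"
      using y assms by (auto simp: shift_up_def)
    then show ?thesis by (metis image_eqI set_map)
  qed
qed

lemma distinct_map_shift_up: "distinct m \<Longrightarrow> distinct (map (shift_up i) m)"
  by (simp add: distinct_map strict_mono_on_imp_inj_on[OF strict_mono_on_shift_up])

lemma prep_in_Sym:
  assumes "m \<in> Sym c" "i \<in> {1..c+1}"
  shows "prep i m \<in> Sym (c+1)"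
  using assms set_map_shift_up[of m c i] distinct_map_shift_up[of m i]
  by (auto simp: Sym_def prep_eq)

lemma appd_in_Sym:
  assumes "m \<in> Sym c" "i \<in> {1..c+1}"
  shows "appd m i \<in> Sym (c+1)"
  using assms set_map_shift_up[of m c i] distinct_map_shift_up[of m i]
  by (auto simp: Sym_def appd_eq)

lemma std_map_strict_mono:
  assumes "strict_mono_on (set u) g"
  shows "std (map g u) = std u"
proof -
  have "card {y \<in> g ` set u. y \<le> g x} = card {y \<in> set u. y \<le> x}" if "x \<in> set u" for x
  proof -
    have "g y \<le> g x \<longleftrightarrow> y \<le> x" if "y \<in> set u" for y
      using assms \<open>x \<in> set u\<close> that unfolding strict_mono_on_def
      by (metis linorder_not_less order_less_imp_le nat_less_le)
    then have "{y \<in> g ` set u. y \<le> g x} = g ` {y \<in> set u. y \<le> x}"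
      by auto
    moreover have "inj_on g {y \<in> set u. y \<le> x}"
      using strict_mono_on_imp_inj_on[OF assms] by (rule inj_on_subset) auto
    ultimately show ?thesis by (simp add: card_image)
  qed
  then show ?thesis unfolding std_def by simp
qed

lemma std_Sym:
  assumes "m \<in> Sym c" shows "std m = m"
proof -
  have "{y \<in> set m. y \<le> x} = {1..x}" if "x \<in> set m" for x
    using assms that by (auto simp: Sym_def)
  then show ?thesis unfolding std_def by (simp add: map_idI)
qed

lemma std_rotate: "std (rotate k u) = rotate k (std u)"
  unfolding std_def by (simp add: rotate_map)

lemma std_map_shift_up_Sym: "m \<in> Sym c \<Longrightarrow> std (map (shift_up i) m) = m"
  by (simp add: std_map_strict_mono strict_mono_on_shift_up std_Sym)

lemma self_in_cyc_shifts: "m \<noteq> [] \<Longrightarrow> m \<in> cyc_shifts m"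
  unfolding cyc_shifts_def by (intro CollectI exI[where x = 0]) simp

lemma rotate_in_cyc_shifts:
  assumes "u \<in> cyc_shifts m"
  shows "rotate k u \<in> cyc_shifts m"
proof -
  obtain i where u: "u = rotate i m" and "i < length m"
    using assms by (auto simp: cyc_shifts_def)
  then have "rotate k u = rotate ((k + i) mod length m) m"
    by (metis rotate_conv_mod rotate_rotate)
  moreover have "(k + i) mod length m < length m"
    using \<open>i < length m\<close> by (intro mod_less_divisor) linarith
  ultimately show ?thesis by (auto simp: cyc_shifts_def)
qed

lemma Kstep_rotate_factor:
  assumes "a @ u @ b \<in> Sym n" "std u \<in> cyc_shifts m" "length m = c"
  shows "Kstep (cycK c m) c n (a @ u @ b) (a @ rotate k u @ b)"
proof -
  have "length u = length (std u)"
    by (simp add: std_def)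
  then have "length u = c"
    using assms(2,3) by (auto simp: cyc_shifts_def)
  moreover have "std (rotate k u) \<in> cyc_shifts m"
    using assms(2) by (simp add: std_rotate rotate_in_cyc_shifts)
  moreover have "a @ rotate k u @ b \<in> Sym n"
    using assms(1) by (simp add: Sym_def)
  moreover have "cyc_shifts m \<in> cycK c m"
    by (simp add: cycK_def)
  ultimately show ?thesis
    using assms(1,2) unfolding Kstep_def
    by (intro conjI exI[where x = a] exI[where x = b] exI[where x = u]
        exI[where x = "rotate k u"] bexI[where x = "cyc_shifts m"]) simp_all
qed

lemma Kequiv_via_rotations:
  assumes "a @ u @ b \<in> Sym n" "a' @ v @ b' \<in> Sym n"
    and "std u \<in> cyc_shifts m" "std v \<in> cyc_shifts m" "length m = c"
    and "a @ rotate k u @ b = a' @ rotate l v @ b'"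
  shows "Kequiv (cycK c m) c n (a @ u @ b) (a' @ v @ b')"
proof -
  have "Kstep (cycK c m) c n (a @ u @ b) (a' @ rotate l v @ b')"
    using Kstep_rotate_factor[OF assms(1,3,5)] assms(6) by metis
  moreover have "Kstep (cycK c m) c n (a' @ v @ b') (a' @ rotate l v @ b')"
    using Kstep_rotate_factor[OF assms(2,4,5)] .
  ultimately show ?thesis
    using assms(1,2) unfolding Kequiv_def
    by (blast intro: converse_rtranclp_into_rtranclp r_into_rtranclp)
qed

theorem lemma2p4:
  fixes c :: nat and m :: "nat list" and j :: nat
  assumes "c > 1" and "m \<in> Sym c" and "j \<in> {1..c}"
  shows "Kequiv (cycK c m) c (c + 1) (prep j m) (appd m (j + 1)) \<and>
         Kequiv (cycK c m) c (c + 1) (appd m j) (prep (j + 1) m)"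
proof -
  have "j \<in> set m"
    using assms(2,3) by (auto simp: Sym_def)
  then obtain xs ys where m: "m = xs @ j # ys"
    by (meson split_list)
  define xs' ys' where "xs' = map (shift_up j) xs" and "ys' = map (shift_up j) ys"
  define u v where "u = map (shift_up j) m" and "v = map (shift_up (j + 1)) m"
  have "distinct (xs @ j # ys)"
    using assms(2) by (simp add: Sym_def m)
  then have "u = xs' @ (j + 1) # ys'" "v = xs' @ j # ys'"
    unfolding u_def v_def xs'_def ys'_def m by (fact map_shift_up_split)+
  then have rotations:
    "[j] @ rotate (Suc (length xs')) u @ [] = [] @ rotate (length xs') v @ [j + 1]"
    "[] @ rotate (length xs') u @ [j] = [j + 1] @ rotate (Suc (length xs')) v @ []"
    by (simp_all add: rotate_append)
  have "m \<noteq> []"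
    using assms(1) length_Sym[OF assms(2)] by auto
  then have std_uv: "std u \<in> cyc_shifts m" "std v \<in> cyc_shifts m"
    unfolding u_def v_def by (simp_all add: std_map_shift_up_Sym[OF assms(2)] self_in_cyc_shifts)
  have words: "prep j m = [j] @ u @ []" "appd m (j + 1) = [] @ v @ [j + 1]"
    "appd m j = [] @ u @ [j]" "prep (j + 1) m = [j + 1] @ v @ []"
    unfolding prep_eq appd_eq u_def v_def by simp_all
  have ij: "j \<in> {1..c+1}" "j + 1 \<in> {1..c+1}"
    using assms(3) by auto
  have "Kequiv (cycK c m) c (c + 1) (prep j m) (appd m (j + 1))"
    using prep_in_Sym[OF assms(2) ij(1)] appd_in_Sym[OF assms(2) ij(2)] unfolding words
    by (rule Kequiv_via_rotations[OF _ _ std_uv length_Sym[OF assms(2)] rotations(1)])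
  moreover have "Kequiv (cycK c m) c (c + 1) (appd m j) (prep (j + 1) m)"
    using appd_in_Sym[OF assms(2) ij(1)] prep_in_Sym[OF assms(2) ij(2)] unfolding words
    by (rule Kequiv_via_rotations[OF _ _ std_uv length_Sym[OF assms(2)] rotations(2)])
  ultimately show ?thesis ..
qed

end
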